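(* If $S(A)=(a_n)$ is a regular Stanley sequence, then there is a unique choice of constants $\lambda,\sigma$ and independent Stanley sequence $(a'_n)$ such that $(a'_n)$ has character $\lambda$ and, for all sufficiently large $k$ and all $0\le i<2^k$, $a_{2^k-\sigma+i}=a_{2^k-\sigma}+a'_i$ and $a_{2^k-\sigma}=2a_{2^k-\sigma-1}-\lambda+1$.
   Context: A set of non-negative integers is 3-free if no three of its elements form an arithmetic progression. For a finite 3-free set $A=\{a_0<\cdots<a_k\}$ of non-negative integers, the Stanley sequence $S(A)=(a_n)_{n\ge0}$ is the increasing sequence with initial terms $a_0,\ldots,a_k$ in which each subsequent $a_{n+1}$ is the smallest integer greater than $a_n$ such that $\{a_0,\ldots,a_{n+1}\}$ is 3-free. Throughout, Stanley sequences are in root position ($a_0=0$). A Stanley sequence $(a_n)$ is independent with character $\lambda$ if for all sufficiently large $k$: $a_{2^k+i}=a_{2^k}+a_i$ for $0\le i<2^k$, and $a_{2^k}=2a_{2^k-1}-\lambda+1$ (the constant $\lambda$ is then unique). A Stanley sequence $(a_n)$ is regular if there exist constants $\lambda,\sigma$ and an independent Stanley sequence $(a'_n)$ of character $\lambda$ such that for all large $k$ and $0\le i<2^k$: $a_{2^k-\sigma+i}=a_{2^k-\sigma}+a'_i$ and $a_{2^k-\sigma}=2a_{2^k-\sigma-1}-\lambda+1$. *)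

theory Defs
  imports Main
begin

definition three_free :: "nat set \<Rightarrow> bool" where
  "three_free S \<longleftrightarrow> (\<forall>x\<in>S. \<forall>y\<in>S. \<forall>z\<in>S. x < y \<and> y < z \<longrightarrow> x + z \<noteq> 2 * y)"

definition stanley_of :: "nat set \<Rightarrow> (nat \<Rightarrow> nat) \<Rightarrow> bool" where
  "stanley_of A a \<longleftrightarrow>
     (\<forall>n < card A. a n = sorted_list_of_set A ! n) \<and>
     (\<forall>n \<ge> card A. a n = (LEAST m. a (n - 1) < m \<and> three_free (insert m (a ` {..<n}))))"

definition is_stanley :: "(nat \<Rightarrow> nat) \<Rightarrow> bool" where
  "is_stanley a \<longleftrightarrow> (\<exists>A. finite A \<and> three_free A \<and> 0 \<in> A \<and> stanley_of A a)"

definition indep_char :: "(nat \<Rightarrow> nat) \<Rightarrow> int \<Rightarrow> bool" where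
  "indep_char a lam \<longleftrightarrow> (\<exists>K. \<forall>k\<ge>K.
     (\<forall>i < 2^k. a (2^k + i) = a (2^k) + a i) \<and>
     int (a (2^k)) = 2 * int (a (2^k - 1)) - lam + 1)"

definition independent_stanley :: "(nat \<Rightarrow> nat) \<Rightarrow> bool" where
  "independent_stanley a \<longleftrightarrow> is_stanley a \<and> (\<exists>lam. indep_char a lam)"

text \<open>The regularity condition for given constants lam, sigma and sequence a'.
  Indices 2^k - sigma + i are integers; for large k they are nonnegative.\<close>
definition regular_data :: "(nat \<Rightarrow> nat) \<Rightarrow> int \<Rightarrow> int \<Rightarrow> (nat \<Rightarrow> nat) \<Rightarrow> bool" where
  "regular_data a lam sigma a' \<longleftrightarrow>
     is_stanley a' \<and> indep_char a' lam \<and>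
     (\<exists>K. \<forall>k\<ge>K. 2^k - sigma - 1 \<ge> 0 \<and>
        (\<forall>i::nat < 2^k. a (nat (2^k - sigma + int i)) = a (nat (2^k - sigma)) + a' i) \<and>
        int (a (nat (2^k - sigma))) = 2 * int (a (nat (2^k - sigma - 1))) - lam + 1)"

definition regular_stanley :: "(nat \<Rightarrow> nat) \<Rightarrow> bool" where
  "regular_stanley a \<longleftrightarrow> is_stanley a \<and> (\<exists>lam sigma a'. regular_data a lam sigma a')"

end

theory Submission
  imports Defs
begin

text \<open>A Stanley sequence is strictly increasing. Given two regularity data with offsets
  \<open>\<sigma>\<^sub>1 < \<sigma>\<^sub>2\<close>, write \<open>d = \<sigma>\<^sub>2 - \<sigma>\<^sub>1\<close>: the translation property for \<open>\<sigma>\<^sub>2\<close> expresses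
  \<open>a(2\<^sup>k - \<sigma>\<^sub>1)\<close> and \<open>a(2\<^sup>k - \<sigma>\<^sub>1 - 1)\<close> as \<open>a(2\<^sup>k - \<sigma>\<^sub>2)\<close> plus the fixed terms \<open>a'(d)\<close>, \<open>a'(d - 1)\<close>,
  and the doubling relation for \<open>\<sigma>\<^sub>1\<close> then pins \<open>a(2\<^sup>k - \<sigma>\<^sub>2)\<close> to a constant independent of \<open>k\<close>,
  which is impossible. Once \<open>\<sigma>\<close> is fixed, \<open>\<lambda>\<close> and \<open>a'\<close> are read off the defining relations.\<close>

lemma three_free_subset: "three_free B \<Longrightarrow> A \<subseteq> B \<Longrightarrow> three_free A"
  unfolding three_free_def by blast

lemma three_free_insert_large:
  assumes "three_free S" and "\<forall>x\<in>S. 2 * x < m"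
  shows "three_free (insert m S)"
  unfolding three_free_def
proof (intro ballI impI)
  fix x y z assume xyz: "x \<in> insert m S" "y \<in> insert m S" "z \<in> insert m S"
    and ord: "x < y \<and> y < z"
  show "x + z \<noteq> 2 * y"
  proof (cases "z = m")
    case True
    then have "y \<in> S" using xyz ord by auto
    then show ?thesis using assms(2) True by fastforce
  next
    case False
    then have "z \<in> S" using xyz by auto
    moreover from this have "x \<in> S" "y \<in> S" using xyz ord assms(2) by fastforce+
    ultimately show ?thesis using assms(1) ord unfolding three_free_def by blast
  qed
qed

lemma stanley_of_step:
  assumes st: "stanley_of A a" and n: "card A \<le> n" "1 \<le> n"
    and free: "three_free (a ` {..<n})"
  shows "a (n - 1) < a n \<and> three_free (a ` {..<Suc n})"
proof -
  let ?S = "a ` {..<n}"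
  define M where "M = Max ?S"
  have le_M: "\<forall>x\<in>?S. x \<le> M" using M_def by simp
  have "a (n - 1) \<in> ?S" using n by auto
  then have "a (n - 1) \<le> M" using le_M by blast
  then have "a (n - 1) < 2 * M + 1" by simp
  moreover have "three_free (insert (2 * M + 1) ?S)"
    using le_M by (intro three_free_insert_large[OF free]) (auto simp: less_Suc_eq_le)
  ultimately have candidate: "\<exists>m. a (n - 1) < m \<and> three_free (insert m ?S)" by blast
  have "a n = (LEAST m. a (n - 1) < m \<and> three_free (insert m ?S))"
    using st n unfolding stanley_of_def by blast
  then have "a (n - 1) < a n \<and> three_free (insert (a n) ?S)"
    using LeastI_ex[OF candidate] by simp
  moreover have "a ` {..<Suc n} = insert (a n) ?S" by (simp add: lessThan_Suc)
  ultimately show ?thesis by simp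
qed

lemma stanley_of_initial:
  assumes "stanley_of A a" and "finite A" and "n < card A"
  shows "a n = sorted_list_of_set A ! n" and "a n \<in> A"
proof -
  show an: "a n = sorted_list_of_set A ! n"
    using assms unfolding stanley_of_def by blast
  have "sorted_list_of_set A ! n \<in> set (sorted_list_of_set A)"
    using assms(3) by (intro nth_mem) simp
  then show "a n \<in> A" using an assms(2) by simp
qed

lemma stanley_of_three_free_prefix:
  assumes st: "stanley_of A a" and A: "finite A" "three_free A" "A \<noteq> {}"
  shows "three_free (a ` {..<n})"
proof (induction n)
  case 0
  then show ?case by (simp add: three_free_def)
next
  case (Suc n)
  show ?case
  proof (cases "Suc n \<le> card A")
    case True
    then have "a ` {..<Suc n} \<subseteq> A" using stanley_of_initial(2)[OF st A(1)] by auto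
    then show ?thesis using three_free_subset A(2) by blast
  next
    case False
    moreover have "1 \<le> card A" using A(1,3) by (simp add: Suc_le_eq card_gt_0_iff)
    ultimately show ?thesis using stanley_of_step[OF st _ _ Suc.IH] by simp
  qed
qed

lemma stanley_of_strict_mono:
  assumes st: "stanley_of A a" and A: "finite A" "three_free A" "A \<noteq> {}"
  shows "strict_mono a"
proof -
  have "a n < a (Suc n)" for n
  proof (cases "Suc n < card A")
    case True
    have "sorted_list_of_set A ! n < sorted_list_of_set A ! Suc n"
      using sorted_wrt_nth_less[OF strict_sorted_list_of_set, of n "Suc n" A] True A(1)
      by simp
    then show ?thesis using stanley_of_initial(1)[OF st A(1)] True by simp
  next
    case False
    then show ?thesis
      using stanley_of_step[OF st _ _ stanley_of_three_free_prefix[OF st A, of "Suc n"]] by simp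
  qed
  then show ?thesis by (simp add: strict_mono_Suc_iff)
qed

lemma is_stanley_strict_mono: "is_stanley a \<Longrightarrow> strict_mono a"
  unfolding is_stanley_def using stanley_of_strict_mono by blast

lemma regular_dataE:
  assumes "regular_data a lam sigma a'"
  obtains K where "\<And>k i. K \<le> k \<Longrightarrow> i < 2 ^ k \<Longrightarrow>
      a (nat (2 ^ k - sigma + int i)) = a (nat (2 ^ k - sigma)) + a' i"
    and "\<And>k. K \<le> k \<Longrightarrow>
      int (a (nat (2 ^ k - sigma))) = 2 * int (a (nat (2 ^ k - sigma - 1))) - lam + 1"
  using assms unfolding regular_data_def by fastforce

lemma nat_less_two_power: "n < 2 ^ k \<Longrightarrow> k \<le> k' \<Longrightarrow> n < (2::nat) ^ k'"
  using power_increasing[of k k' "2::nat"] by linarith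

lemma regular_data_offset_eventually_const:
  assumes r1: "regular_data a l1 s1 b1" and r2: "regular_data a l2 s2 b2" and "s1 < s2"
  obtains K c where "\<And>k. K \<le> k \<Longrightarrow> int (a (nat (2 ^ k - s2))) = c"
proof -
  obtain K1 where doubling1: "\<And>k. K1 \<le> k \<Longrightarrow>
      int (a (nat (2 ^ k - s1))) = 2 * int (a (nat (2 ^ k - s1 - 1))) - l1 + 1"
    using regular_dataE[OF r1] by metis
  obtain K2 where shift2: "\<And>k i. K2 \<le> k \<Longrightarrow> i < 2 ^ k \<Longrightarrow>
      a (nat (2 ^ k - s2 + int i)) = a (nat (2 ^ k - s2)) + b2 i"
    using regular_dataE[OF r2] by metis
  define d where "d = nat (s2 - s1)"
  have d: "1 \<le> d" "int d = s2 - s1" using \<open>s1 < s2\<close> d_def by auto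
  have "int (a (nat (2 ^ k - s2))) = int (b2 d) - 2 * int (b2 (d - 1)) + l1 - 1"
    if k: "max K1 K2 + d \<le> k" for k
  proof -
    have "d < 2 ^ k" using nat_less_two_power[OF less_exp, of d] k by simp
    moreover have idx: "2 ^ k - s2 + int d = 2 ^ k - s1"
      "2 ^ k - s2 + int (d - 1) = 2 ^ k - s1 - 1"
      using d by (auto simp: of_nat_diff)
    ultimately have "a (nat (2 ^ k - s1)) = a (nat (2 ^ k - s2)) + b2 d"
      and "a (nat (2 ^ k - s1 - 1)) = a (nat (2 ^ k - s2)) + b2 (d - 1)"
      using shift2[of k d] shift2[of k "d - 1"] k unfolding idx by auto
    then show ?thesis using doubling1[of k] k by simp
  qed
  then show ?thesis using that by blast
qed

lemma strict_mono_offset_powers_not_eventually_const: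
  assumes "strict_mono a" and const: "\<And>k. K \<le> k \<Longrightarrow> int (a (nat (2 ^ k - s))) = c"
  shows False
proof -
  define k where "k = max K (nat s)"
  have "s \<le> int (nat s)" by simp
  also have "\<dots> < 2 ^ nat s"
    using less_exp[of "nat s"] by (metis of_nat_less_iff of_nat_numeral of_nat_power)
  also have "\<dots> \<le> 2 ^ k" unfolding k_def by (rule power_increasing) simp_all
  finally have "s < 2 ^ k" .
  moreover have "(2::int) ^ Suc k = 2 * 2 ^ k" and "(0::int) < 2 ^ k" by simp_all
  ultimately have "0 \<le> 2 ^ k - s" and "2 ^ k - s < 2 ^ Suc k - s" by linarith+
  then have "nat (2 ^ k - s) < nat (2 ^ Suc k - s)" by (simp only: nat_less_eq_zless)
  then have "a (nat (2 ^ k - s)) < a (nat (2 ^ Suc k - s))"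
    using assms(1) by (simp add: strict_mono_def)
  moreover have "K \<le> k" unfolding k_def by simp
  ultimately show False using const[of k] const[of "Suc k"] by simp
qed

lemma regular_data_unique:
  assumes mono: "strict_mono a"
    and r1: "regular_data a l1 s1 b1" and r2: "regular_data a l2 s2 b2"
  shows "l1 = l2" and "s1 = s2" and "b1 = b2"
proof -
  have no_less: False if "regular_data a l s b" "regular_data a l' s' b'" "s < s'"
    for l s b l' s' b'
    using regular_data_offset_eventually_const[OF that]
      strict_mono_offset_powers_not_eventually_const[OF mono] by metis
  show s: "s1 = s2" using no_less[OF r1 r2] no_less[OF r2 r1] by fastforce
  obtain K1 where shift1: "\<And>k i. K1 \<le> k \<Longrightarrow> i < 2 ^ k \<Longrightarrow>
      a (nat (2 ^ k - s1 + int i)) = a (nat (2 ^ k - s1)) + b1 i"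
    and doubling1: "\<And>k. K1 \<le> k \<Longrightarrow>
      int (a (nat (2 ^ k - s1))) = 2 * int (a (nat (2 ^ k - s1 - 1))) - l1 + 1"
    using regular_dataE[OF r1] by metis
  obtain K2 where shift2: "\<And>k i. K2 \<le> k \<Longrightarrow> i < 2 ^ k \<Longrightarrow>
      a (nat (2 ^ k - s1 + int i)) = a (nat (2 ^ k - s1)) + b2 i"
    and doubling2: "\<And>k. K2 \<le> k \<Longrightarrow>
      int (a (nat (2 ^ k - s1))) = 2 * int (a (nat (2 ^ k - s1 - 1))) - l2 + 1"
    using regular_dataE[OF r2] s by metis
  show "l1 = l2" using doubling1[of "max K1 K2"] doubling2[of "max K1 K2"] by simp
  have "b1 i = b2 i" for i
  proof -
    have "i < 2 ^ max (max K1 K2) i" using nat_less_two_power[OF less_exp] by simp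
    then show ?thesis
      using shift1[of "max (max K1 K2) i" i] shift2[of "max (max K1 K2) i" i] by simp
  qed
  then show "b1 = b2" ..
qed

theorem mainTheorem7:
  fixes a :: "nat \<Rightarrow> nat"
  assumes "regular_stanley a"
  shows "\<exists>!(lam, sigma, a'). regular_data a lam sigma a'"
proof -
  obtain l s b where r: "regular_data a l s b" and "is_stanley a"
    using assms unfolding regular_stanley_def by blast
  have mono: "strict_mono a" using \<open>is_stanley a\<close> by (rule is_stanley_strict_mono)
  show ?thesis
  proof (rule ex1I[of _ "(l, s, b)"])
    fix y assume "case y of (lam, sigma, a') \<Rightarrow> regular_data a lam sigma a'"
    then show "y = (l, s, b)"
      using regular_data_unique[OF mono _ r] by (cases y) auto
  qed (use r in simp)
qed

end
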